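(* There is an absolute constant $c>0$ such that for every integer $k\ge 1$ and every integer $n\ge 2k$, there exists an $n$-vertex graph $G$ of pathwidth $k$ such that every EPG-representation of $G$ uses at least $c\,kn$ grid-edges (hence lies in a grid of area at least $c\,kn$).
   Context: The $w\times h$-grid consists of all grid-points $(i,j)$ with integer coordinates $1\le i\le w$, $1\le j\le h$, and all grid-edges joining grid-points at distance $1$; its area is $wh$. An EPG-representation of a graph $G$ assigns to each vertex $v$ a path $\mathrm{path}(v)$ in the grid such that $(v,w)$ is an edge of $G$ if and only if $\mathrm{path}(v)$ and $\mathrm{path}(w)$ share a grid-edge. The pathwidth of $G$ is the smallest $k$ such that $G$ is a subgraph of a $(k+1)$-colourable interval graph (an interval graph is the intersection graph of a family of closed intervals of the real line). *)

theory Defs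
  imports Complex_Main
begin

definition simple_graph :: "nat \<Rightarrow> (nat \<Rightarrow> nat \<Rightarrow> bool) \<Rightarrow> bool" where
  "simple_graph n E \<longleftrightarrow>
     (\<forall>u v. E u v \<longrightarrow> u < n \<and> v < n) \<and>
     (\<forall>u v. E u v \<longrightarrow> E v u) \<and>
     (\<forall>v. \<not> E v v)"

text \<open>G is a (spanning) subgraph of a (k+1)-colourable interval graph: each vertex v
  gets a closed real interval [a v, b v]; the interval graph joins distinct vertices whose
  intervals intersect; col is a proper (k+1)-colouring of that interval graph; every edge
  of G is an edge of the interval graph.\<close>

definition subgraph_of_colourable_interval_graph ::
    "nat \<Rightarrow> (nat \<Rightarrow> nat \<Rightarrow> bool) \<Rightarrow> nat \<Rightarrow> bool" where
  "subgraph_of_colourable_interval_graph n E m \<longleftrightarrow>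
     (\<exists>(a :: nat \<Rightarrow> real) (b :: nat \<Rightarrow> real) (col :: nat \<Rightarrow> nat).
        (\<forall>v<n. a v \<le> b v \<and> col v < m) \<and>
        (\<forall>u<n. \<forall>v<n. u \<noteq> v \<and> max (a u) (a v) \<le> min (b u) (b v) \<longrightarrow> col u \<noteq> col v) \<and>
        (\<forall>u<n. \<forall>v<n. E u v \<longrightarrow> max (a u) (a v) \<le> min (b u) (b v)))"

definition pathwidth :: "nat \<Rightarrow> (nat \<Rightarrow> nat \<Rightarrow> bool) \<Rightarrow> nat" where
  "pathwidth n E = (LEAST k. subgraph_of_colourable_interval_graph n E (k + 1))"

type_synonym point = "int \<times> int"

definition grid_adj :: "point \<Rightarrow> point \<Rightarrow> bool" where
  "grid_adj p q \<longleftrightarrow> \<bar>fst p - fst q\<bar> + \<bar>snd p - snd q\<bar> = 1"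

definition grid_path :: "point list \<Rightarrow> bool" where
  "grid_path P \<longleftrightarrow> length P \<ge> 2 \<and> distinct P \<and>
     (\<forall>i. i + 1 < length P \<longrightarrow> grid_adj (P ! i) (P ! (i + 1)))"

definition path_edges :: "point list \<Rightarrow> point set set" where
  "path_edges P = {{P ! i, P ! (i + 1)} | i. i + 1 < length P}"

definition epg_rep :: "nat \<Rightarrow> (nat \<Rightarrow> nat \<Rightarrow> bool) \<Rightarrow> (nat \<Rightarrow> point list) \<Rightarrow> bool" where
  "epg_rep n E path \<longleftrightarrow>
     (\<forall>v<n. grid_path (path v)) \<and>
     (\<forall>u<n. \<forall>v<n. u \<noteq> v \<longrightarrow>
        (E u v \<longleftrightarrow> path_edges (path u) \<inter> path_edges (path v) \<noteq> {}))"

definition in_grid :: "nat \<Rightarrow> nat \<Rightarrow> nat \<Rightarrow> (nat \<Rightarrow> point list) \<Rightarrow> bool" where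
  "in_grid w h n path \<longleftrightarrow>
     (\<forall>v<n. \<forall>p\<in>set (path v). 1 \<le> fst p \<and> fst p \<le> int w \<and> 1 \<le> snd p \<and> snd p \<le> int h)"

definition used_edges :: "nat \<Rightarrow> (nat \<Rightarrow> point list) \<Rightarrow> nat" where
  "used_edges n path = card (\<Union>v<n. path_edges (path v))"

end

theory Submission
  imports Defs
begin

text \<open>The witness is the complete bipartite graph K(k, n-k). Its pathwidth is k: the k small
  vertices get one long interval each and the others disjoint point intervals; conversely, by the Helly property
  of intervals either one small vertex and all big ones share a point, or two big intervals are
  disjoint and then all k small intervals meet a common point together with one big one.
  In an EPG-representation the two sides are independent sets, so the grid-edges shared by the
  k(n-k) adjacent pairs are pairwise distinct, giving k(n-k) \<ge> kn/2 grid-edges; and a w \<times> h grid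
  has at most 2wh grid-edges.\<close>

definition complete_bipartite :: "nat \<Rightarrow> nat \<Rightarrow> nat \<Rightarrow> nat \<Rightarrow> bool" where
  "complete_bipartite k n u v \<longleftrightarrow> u < n \<and> v < n \<and> ((u < k \<and> k \<le> v) \<or> (v < k \<and> k \<le> u))"

lemma simple_graph_complete_bipartite: "simple_graph n (complete_bipartite k n)"
  unfolding simple_graph_def complete_bipartite_def by auto

lemma card_le_colours_if_common_point:
  assumes col: "\<forall>v<n. col v < m"
    and proper: "\<forall>u<n. \<forall>v<n. u \<noteq> v \<and> max (a u) (a v) \<le> min (b u) (b v) \<longrightarrow> col u \<noteq> col v"
    and S: "S \<subseteq> {..<n}" and t: "\<forall>v\<in>S. a v \<le> (t::real) \<and> t \<le> b v"
  shows "card S \<le> m"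
proof -
  have "inj_on col S"
  proof (rule inj_onI, rule ccontr)
    fix u v assume "u \<in> S" "v \<in> S" "col u = col v" "u \<noteq> v"
    moreover have "a u \<le> t" "t \<le> b u" "a v \<le> t" "t \<le> b v"
      using t \<open>u \<in> S\<close> \<open>v \<in> S\<close> by auto
    then have "max (a u) (a v) \<le> min (b u) (b v)" by simp
    ultimately show False using proper S by blast
  qed
  moreover have "col ` S \<subseteq> {..<m}" using col S by auto
  ultimately show ?thesis
    by (metis card_image card_lessThan card_mono finite_lessThan)
qed

lemma intervals_pairwise_intersecting_common_point:
  fixes a b :: "'v \<Rightarrow> real"
  assumes "finite S" "S \<noteq> {}"
    and meet: "\<forall>u\<in>S. \<forall>v\<in>S. max (a u) (a v) \<le> min (b u) (b v)"
  shows "\<exists>t. \<forall>v\<in>S. a v \<le> t \<and> t \<le> b v"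
proof -
  have "Max (a ` S) \<in> a ` S" using assms(1,2) by simp
  then obtain u where "u \<in> S" "a u = Max (a ` S)" by auto
  then have "\<forall>v\<in>S. a v \<le> a u \<and> a u \<le> b v"
    using meet assms(1) by fastforce
  then show ?thesis by blast
qed

lemma complete_bipartite_interval_supergraph:
  "subgraph_of_colourable_interval_graph n (complete_bipartite k n) (k + 1)"
  unfolding subgraph_of_colourable_interval_graph_def
  by (rule exI[of _ "\<lambda>v. if v < k then 0 else real v"],
      rule exI[of _ "\<lambda>v. if v < k then real n else real v"],
      rule exI[of _ "\<lambda>v. if v < k then v else k"])
     (auto simp: complete_bipartite_def)

lemma complete_bipartite_interval_supergraph_colours_ge:
  assumes k: "k \<ge> 1" and n: "n \<ge> 2 * k"
    and H: "subgraph_of_colourable_interval_graph n (complete_bipartite k n) m"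
  shows "k + 1 \<le> m"
proof -
  from H obtain a b :: "nat \<Rightarrow> real" and col where
    intv: "\<forall>v<n. a v \<le> b v \<and> col v < m" and
    proper: "\<forall>u<n. \<forall>v<n. u \<noteq> v \<and> max (a u) (a v) \<le> min (b u) (b v) \<longrightarrow> col u \<noteq> col v" and
    super: "\<forall>u<n. \<forall>v<n. complete_bipartite k n u v \<longrightarrow> max (a u) (a v) \<le> min (b u) (b v)"
    unfolding subgraph_of_colourable_interval_graph_def by blast
  have col: "\<forall>v<n. col v < m" using intv by auto
  have cross: "max (a i) (a v) \<le> min (b i) (b v)" if "i < k" "k \<le> v" "v < n" for i v
    using super that by (auto simp: complete_bipartite_def)
  show ?thesis
  proof (cases "\<forall>u\<in>{k..<n}. \<forall>v\<in>{k..<n}. max (a u) (a v) \<le> min (b u) (b v)")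
    case True
    have "\<forall>u\<in>insert 0 {k..<n}. \<forall>v\<in>insert 0 {k..<n}. max (a u) (a v) \<le> min (b u) (b v)"
      using True cross[of 0] intv k n by (auto simp: max.commute min.commute)
    then obtain t where "\<forall>v\<in>insert 0 {k..<n}. a v \<le> t \<and> t \<le> b v"
      using intervals_pairwise_intersecting_common_point[of "insert 0 {k..<n}" a b] by auto
    then have "card (insert 0 {k..<n}) \<le> m"
      using k n by (intro card_le_colours_if_common_point[OF col proper, of _ t]) auto
    then show ?thesis using k n by simp
  next
    case False
    then obtain u v where uv: "u \<in> {k..<n}" "v \<in> {k..<n}" "b u < a v"
      using intv by (force simp: max_def min_def split: if_splits)
    \<comment> \<open>every small interval meets both u and v, so it contains the gap [b u, a v]\<close>
    have "\<forall>i\<in>insert u {..<k}. a i \<le> b u \<and> b u \<le> b i"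
      using uv intv cross[of _ u] cross[of _ v] by fastforce
    then have "card (insert u {..<k}) \<le> m"
      using uv n by (intro card_le_colours_if_common_point[OF col proper, of _ "b u"]) auto
    then show ?thesis using uv by simp
  qed
qed

lemma pathwidth_complete_bipartite:
  assumes "k \<ge> 1" "n \<ge> 2 * k"
  shows "pathwidth n (complete_bipartite k n) = k"
  unfolding pathwidth_def
  using complete_bipartite_interval_supergraph
        complete_bipartite_interval_supergraph_colours_ge[OF assms]
  by (intro Least_equality) auto

lemma finite_path_edges: "finite (path_edges P)"
proof -
  have "path_edges P = (\<lambda>i. {P ! i, P ! (i + 1)}) ` {..<length P - 1}"
    unfolding path_edges_def by auto
  then show ?thesis by simp
qed

lemma used_edges_ge_card_times_card:
  assumes rep: "epg_rep n E path"
    and IJ: "I \<subseteq> {..<n}" "J \<subseteq> {..<n}"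
    and indep_I: "\<forall>i\<in>I. \<forall>i'\<in>I. \<not> E i i'" and indep_J: "\<forall>j\<in>J. \<forall>j'\<in>J. \<not> E j j'"
    and adj: "\<forall>i\<in>I. \<forall>j\<in>J. E i j"
  shows "card I * card J \<le> used_edges n path"
proof -
  define shared where "shared = (\<lambda>(i, j). path_edges (path i) \<inter> path_edges (path j))"
  have fin: "finite I" "finite J" using IJ finite_subset by auto
  have apart: "path_edges (path u) \<inter> path_edges (path u') = {}"
    if "u \<in> I \<and> u' \<in> I \<or> u \<in> J \<and> u' \<in> J" "u \<noteq> u'" for u u'
  proof -
    have "u < n" "u' < n" "\<not> E u u'" using that IJ indep_I indep_J by auto
    then show ?thesis using rep \<open>u \<noteq> u'\<close> unfolding epg_rep_def by blast
  qed
  have shared_ne: "shared (i, j) \<noteq> {}" if "i \<in> I" "j \<in> J" for i j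
  proof -
    have "E i j" "i < n" "j < n" using adj IJ that by auto
    moreover have "i \<noteq> j" using \<open>E i j\<close> indep_I \<open>i \<in> I\<close> by auto
    ultimately show ?thesis using rep unfolding epg_rep_def shared_def by auto
  qed
  have shared_disj: "shared (i, j) \<inter> shared (i', j') = {}"
    if "i \<in> I" "j \<in> J" "i' \<in> I" "j' \<in> J" "(i, j) \<noteq> (i', j')" for i j i' j'
  proof (cases "i = i'")
    case True
    then have "path_edges (path j) \<inter> path_edges (path j') = {}"
      using apart that by auto
    then show ?thesis unfolding shared_def by auto
  next
    case False
    then have "path_edges (path i) \<inter> path_edges (path i') = {}"
      using apart that by auto
    then show ?thesis unfolding shared_def by auto
  qed
  have fin_shared: "finite (shared x)" for x
    by (auto simp: shared_def finite_path_edges split: prod.splits)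
  have "card I * card J = (\<Sum>x\<in>I \<times> J. 1)" by (simp add: card_cartesian_product)
  also have "\<dots> \<le> (\<Sum>x\<in>I \<times> J. card (shared x))"
    using shared_ne fin_shared
    by (intro sum_mono) (auto simp: Suc_leI card_gt_0_iff)
  also have "\<dots> = card (\<Union>x\<in>I \<times> J. shared x)"
    using fin fin_shared shared_disj by (intro card_UN_disjoint[symmetric]) fastforce+
  also have "\<dots> \<le> used_edges n path"
    unfolding used_edges_def shared_def using IJ
    by (intro card_mono) (auto simp: finite_path_edges)
  finally show ?thesis .
qed

lemma used_edges_complete_bipartite:
  assumes "epg_rep n (complete_bipartite k n) path" "k \<le> n"
  shows "k * (n - k) \<le> used_edges n path"
proof -
  have "card {..<k} * card {k..<n} \<le> used_edges n path"
    using assms(2)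
    by (intro used_edges_ge_card_times_card[OF assms(1)]) (auto simp: complete_bipartite_def)
  then show ?thesis by simp
qed

definition grid_step :: "point \<Rightarrow> point \<Rightarrow> point set" where
  "grid_step p d = {p, (fst p + fst d, snd p + snd d)}"

lemma grid_adj_grid_step:
  assumes "grid_adj p q"
  shows "\<exists>r\<in>{p, q}. \<exists>d\<in>{(1, 0), (0, 1)}. {p, q} = grid_step r d"
proof -
  obtain x y x' y' where p: "p = (x, y)" and q: "q = (x', y')" by fastforce
  have "\<bar>x - x'\<bar> + \<bar>y - y'\<bar> = 1" using assms by (simp add: grid_adj_def p q)
  then have "(x' = x + 1 \<and> y' = y) \<or> (x = x' + 1 \<and> y = y') \<or> (x' = x \<and> y' = y + 1) \<or> (x = x' \<and> y = y' + 1)"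
    by arith
  then show ?thesis by (auto simp: p q grid_step_def insert_commute)
qed

lemma used_edges_le_grid_area:
  assumes "epg_rep n E path" "in_grid w h n path"
  shows "used_edges n path \<le> 2 * (w * h)"
proof -
  define G where "G = {1..int w} \<times> {1..int h}"
  define D where "D = {((1::int), (0::int)), (0, 1)}"
  have "(\<Union>v<n. path_edges (path v)) \<subseteq> (\<lambda>(r, d). grid_step r d) ` (G \<times> D)"
  proof
    fix e assume "e \<in> (\<Union>v<n. path_edges (path v))"
    then obtain v i where v: "v < n" "i + 1 < length (path v)"
      and e: "e = {path v ! i, path v ! (i + 1)}"
      unfolding path_edges_def by auto
    have "grid_adj (path v ! i) (path v ! (i + 1))"
      using assms(1) v unfolding epg_rep_def grid_path_def by blast
    moreover have "path v ! i \<in> set (path v)" "path v ! (i + 1) \<in> set (path v)"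
      using v by auto
    then have "path v ! i \<in> G" "path v ! (i + 1) \<in> G"
      using assms(2) v unfolding in_grid_def G_def by (auto simp: mem_Times_iff)
    ultimately show "e \<in> (\<lambda>(r, d). grid_step r d) ` (G \<times> D)"
      unfolding e D_def by (fastforce dest: grid_adj_grid_step)
  qed
  then have "used_edges n path \<le> card ((\<lambda>(r, d). grid_step r d) ` (G \<times> D))"
    unfolding used_edges_def by (rule card_mono[rotated]) (simp add: G_def D_def)
  also have "\<dots> \<le> card (G \<times> D)" by (rule card_image_le) (simp add: G_def D_def)
  also have "\<dots> = 2 * (w * h)" by (simp add: G_def D_def card_cartesian_product)
  finally show ?thesis .
qed

lemma half_product_le_complement_product:
  assumes "n \<ge> 2 * k"
  shows "real k * real n / 2 \<le> real (k * (n - k))"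
proof -
  have "real k * (real n / 2) \<le> real k * (real n - real k)"
    using assms by (intro mult_left_mono) auto
  then show ?thesis using assms by (simp add: of_nat_diff)
qed

theorem corollary5:
  shows "\<exists>c :: real. c > 0 \<and>
    (\<forall>k n :: nat. k \<ge> 1 \<longrightarrow> n \<ge> 2 * k \<longrightarrow>
      (\<exists>E. simple_graph n E \<and> pathwidth n E = k \<and>
        (\<forall>path. epg_rep n E path \<longrightarrow> real (used_edges n path) \<ge> c * real k * real n) \<and>
        (\<forall>w h path. epg_rep n E path \<and> in_grid w h n path \<longrightarrow>
            real (w * h) \<ge> c * real k * real n)))"
proof (intro exI[of _ "1/4"] conjI allI impI exI[of _ "complete_bipartite _ _"])
  fix k n :: nat assume k: "k \<ge> 1" and n: "n \<ge> 2 * k"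
  have quarter: "1/4 * real k * real n \<le> real m" if "2 * m \<ge> k * (n - k)" for m
  proof -
    have "real (k * (n - k)) \<le> 2 * real m"
      using of_nat_mono[OF that] by (simp only: of_nat_mult of_nat_numeral)
    then show ?thesis using half_product_le_complement_product[OF n] by linarith
  qed
  show "simple_graph n (complete_bipartite k n)"
    by (rule simple_graph_complete_bipartite)
  show "pathwidth n (complete_bipartite k n) = k"
    using pathwidth_complete_bipartite k n by blast
  fix path
  show "1/4 * real k * real n \<le> real (used_edges n path)"
    if "epg_rep n (complete_bipartite k n) path"
    using used_edges_complete_bipartite[OF that] n by (intro quarter) simp
  fix w h
  assume rep: "epg_rep n (complete_bipartite k n) path \<and> in_grid w h n path"
  have "k * (n - k) \<le> used_edges n path"
    using rep n by (intro used_edges_complete_bipartite) auto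
  also have "\<dots> \<le> 2 * (w * h)"
    using rep by (intro used_edges_le_grid_area) auto
  finally show "1/4 * real k * real n \<le> real (w * h)"
    by (rule quarter)
qed simp

end
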